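(* Let $g$ and $h$ be any two encoders (in the applications, $g=f_t$ is the current model and $h=f_{t-1}$ the previous one) and let $\mathcal{D}$ be any task distribution. Then $$L_{\mathrm{con}}(g;\mathcal{D}) \le \alpha\, L_{\mathrm{con}}(h;\mathcal{D}) + L_{\mathrm{dis}}(g;h,\mathcal{D}) + \beta,$$ $$L_{\mathrm{con}}(g;\mathcal{D}) \ge \alpha\, L_{\mathrm{con}}(h;\mathcal{D}) + L_{\mathrm{dis}}(g;h,\mathcal{D}) + \beta',$$ where $\alpha=\frac{2e^2}{1+e^2}$, $\beta = 2-\alpha+\alpha\log\frac{\alpha}{2}$ and $\beta'=-\alpha\log(1+e^2)-\alpha$.
   Context: Let $\mathcal X$ be a measurable input space and $d\ge 1$. An encoder is a measurable map $f:\mathcal X\to\mathbb R^d$ with $\|f(x)\|_2=1$ for all $x$. A task distribution $\mathcal D$ consists of a probability distribution $\mu$ on a countable set of classes together with, for each class $c$, a probability distribution $\mathcal D_c$ on $\mathcal X$. Sampling scheme: $c^+\sim\mu$ and $c^-\sim\mu$ independently; given $c^+$, $x,x^+$ are drawn i.i.d. from $\mathcal D_{c^+}$; given $c^-$, $x^-\sim\mathcal D_{c^-}$ independently. Let $\ell(v)=\log(1+e^{-v})$. The contrastive loss is $L_{\mathrm{con}}(f;\mathcal D)=\mathbb E\big[\ell\big(f(x)^\top(f(x^+)-f(x^-))\big)\big]$. For an encoder $f$ let $\mathbf p(f;x,x^+,x^-)=\mathrm{softmax}\big(f(x)^\top f(x^+),\,f(x)^\top f(x^-)\big)\in\mathbb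 R^2$. For encoders $g,h$ the distillation loss is $L_{\mathrm{dis}}(g;h,\mathcal D)=\mathbb E\big[-\mathbf p(h;x,x^+,x^-)\cdot\log\mathbf p(g;x,x^+,x^-)\big]$ (logarithm taken componentwise), with the same sampling scheme. *)

theory Defs
  imports "HOL-Probability.Probability"
begin

definition ell :: "real \<Rightarrow> real" where
  "ell v = ln (1 + exp (- v))"

definition encoder :: "'x measure \<Rightarrow> ('x \<Rightarrow> real ^ 'd) \<Rightarrow> bool" where
  "encoder Mx f \<longleftrightarrow> f \<in> borel_measurable Mx \<and> (\<forall>x\<in>space Mx. norm (f x) = 1)"

definition task_dist :: "'x measure \<Rightarrow> 'c pmf \<Rightarrow> ('c \<Rightarrow> 'x measure) \<Rightarrow> bool" where
  "task_dist Mx mu D \<longleftrightarrow> (\<forall>c. D c \<in> space (prob_algebra Mx))"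

text \<open>Expectation under the sampling scheme: c+, c- i.i.d. from mu; x, x+ i.i.d. from D c+;
  x- from D c-, independently.\<close>
definition task_expect :: "'c pmf \<Rightarrow> ('c \<Rightarrow> 'x measure) \<Rightarrow> ('x \<Rightarrow> 'x \<Rightarrow> 'x \<Rightarrow> real) \<Rightarrow> real" where
  "task_expect mu D F =
     measure_pmf.expectation (pair_pmf mu mu)
       (\<lambda>(cp, cn). integral\<^sup>L (D cp \<Otimes>\<^sub>M D cp \<Otimes>\<^sub>M D cn) (\<lambda>(x, xp, xn). F x xp xn))"

definition L_con :: "('x \<Rightarrow> real ^ 'd) \<Rightarrow> 'c pmf \<Rightarrow> ('c \<Rightarrow> 'x measure) \<Rightarrow> real" where
  "L_con f mu D = task_expect mu D (\<lambda>x xp xn. ell (f x \<bullet> (f xp - f xn)))"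

definition p1 :: "('x \<Rightarrow> real ^ 'd) \<Rightarrow> 'x \<Rightarrow> 'x \<Rightarrow> 'x \<Rightarrow> real" where
  "p1 f x xp xn = exp (f x \<bullet> f xp) / (exp (f x \<bullet> f xp) + exp (f x \<bullet> f xn))"

definition p2 :: "('x \<Rightarrow> real ^ 'd) \<Rightarrow> 'x \<Rightarrow> 'x \<Rightarrow> 'x \<Rightarrow> real" where
  "p2 f x xp xn = exp (f x \<bullet> f xn) / (exp (f x \<bullet> f xp) + exp (f x \<bullet> f xn))"

definition L_dis :: "('x \<Rightarrow> real ^ 'd) \<Rightarrow> ('x \<Rightarrow> real ^ 'd) \<Rightarrow> 'c pmf \<Rightarrow> ('c \<Rightarrow> 'x measure) \<Rightarrow> real" where
  "L_dis g h mu D = task_expect mu D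
     (\<lambda>x xp xn. - (p1 h x xp xn * ln (p1 g x xp xn) + p2 h x xp xn * ln (p2 g x xp xn)))"

end

theory Submission
  imports Defs
begin

text \<open>Write \<open>b\<close> and \<open>a\<close> for the margins \<open>f x \<bullet> (f x\<^sup>+ - f x\<^sup>-)\<close> of \<open>g\<close> and \<open>h\<close>; both lie in
  \<open>[-2, 2]\<close> because encoders take unit values. The two-class softmax cross entropy of \<open>g\<close>
  against \<open>h\<close> equals \<open>\<ell>(b) + q b\<close> with \<open>q = e\<^sup>-\<^sup>a / (1 + e\<^sup>-\<^sup>a) \<in> [0, 1]\<close>, so the contrastive
  and distillation integrands differ by \<open>-q b\<close>, and \<open>|q b| \<le> 2q\<close>.
  Upper bound: \<open>2q = 2 - 2 / (1 + e\<^sup>-\<^sup>a)\<close> stays below \<open>\<alpha> \<ell>(a) + \<beta>\<close> for every \<open>\<alpha> > 0\<close>,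
  which is \<open>ln y \<ge> 1 - 1/y\<close> at \<open>y = \<alpha> (1 + e\<^sup>-\<^sup>a) / 2\<close>.
  Lower bound: \<open>a \<ge> -2\<close> gives \<open>2q \<le> 2e\<^sup>2 / (1 + e\<^sup>2) = \<alpha>\<close> and \<open>\<ell>(a) \<le> ln (1 + e\<^sup>2)\<close>.
  All integrands are bounded and measurable, so the pointwise inequalities integrate.\<close>

lemma ell_nonneg: "0 \<le> ell t"
  unfolding ell_def by simp

lemma ell_le_exp_neg: "ell t \<le> exp (- t)"
  unfolding ell_def by (rule ln_add_one_self_le_self) simp

lemma abs_ell_le_exp2:
  assumes "- 2 \<le> t"
  shows "\<bar>ell t\<bar> \<le> exp 2"
proof -
  have "exp (- t) \<le> exp 2" using assms by simp
  then show ?thesis using ell_le_exp_neg[of t] abs_of_nonneg[OF ell_nonneg, of t] by linarith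
qed

lemma sigmoid_weighted_margin_upper:
  fixes a b \<alpha> :: real
  assumes b: "\<bar>b\<bar> \<le> 2" and \<alpha>: "0 < \<alpha>"
  shows "- (exp (- a) / (1 + exp (- a))) * b \<le> \<alpha> * ell a + (2 - \<alpha> + \<alpha> * ln (\<alpha> / 2))"
proof -
  define q where "q = exp (- a) / (1 + exp (- a))"
  define s where "s = 1 + exp (- a)"
  define y where "y = s * (\<alpha> / 2)"
  have s: "0 < s" and y: "0 < y" using \<alpha> by (auto simp: s_def y_def add_pos_pos)
  have q0: "0 \<le> q" unfolding q_def by simp
  have q: "q = 1 - 1 / s" using s by (simp add: q_def s_def field_simps)
  have "\<bar>q * b\<bar> \<le> 2 * q" using b q0 by (simp add: abs_mult mult_left_mono mult.commute)
  then have "- q * b \<le> 2 * q" by (simp add: abs_le_iff)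
  also have "\<dots> = \<alpha> * (1 - 1 / y) + 2 - \<alpha>"
    using s \<alpha> by (simp add: q y_def field_simps)
  also have "\<dots> \<le> \<alpha> * ln y + 2 - \<alpha>"
  proof -
    have "ln (1 / y) \<le> 1 / y - 1" using y by (intro ln_le_minus_one) simp
    then have "1 - 1 / y \<le> ln y" using y by (simp add: ln_div)
    then show ?thesis using \<alpha> by simp
  qed
  also have "ln y = ell a + ln (\<alpha> / 2)"
    using s \<alpha> unfolding y_def ell_def s_def by (subst ln_mult) simp_all
  finally show ?thesis unfolding q_def by (simp add: distrib_left)
qed

lemma sigmoid_weighted_margin_lower:
  fixes a b \<alpha> :: real
  assumes b: "\<bar>b\<bar> \<le> 2" and a: "- 2 \<le> a" and \<alpha>: "2 * exp 2 / (1 + exp 2) \<le> \<alpha>"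
  shows "\<alpha> * ell a - \<alpha> * ln (1 + exp 2) - \<alpha> \<le> - (exp (- a) / (1 + exp (- a))) * b"
proof -
  define q where "q = exp (- a) / (1 + exp (- a))"
  have q0: "0 \<le> q" unfolding q_def by simp
  have "exp (- a) \<le> exp 2" using a by simp
  then have q_le: "q \<le> exp 2 / (1 + exp 2)"
    unfolding q_def by (simp add: field_simps add_pos_pos)
  have "ell a \<le> ln (1 + exp 2)"
    using a unfolding ell_def by (subst ln_le_cancel_iff) (auto intro: add_pos_pos)
  moreover have "0 \<le> \<alpha>" by (rule order_trans[OF _ \<alpha>]) (simp add: add_pos_pos)
  ultimately have "\<alpha> * ell a - \<alpha> * ln (1 + exp 2) - \<alpha> \<le> - \<alpha>"
    by (simp add: mult_left_mono)
  also have "\<dots> \<le> - 2 * q" using q_le \<alpha> by simp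
  also have "\<dots> \<le> - q * b"
  proof -
    have "\<bar>q * b\<bar> \<le> 2 * q" using b q0 by (simp add: abs_mult mult_left_mono mult.commute)
    then show ?thesis by (simp add: abs_le_iff)
  qed
  finally show ?thesis unfolding q_def .
qed

definition margin :: "('x \<Rightarrow> real ^ 'd) \<Rightarrow> 'x \<Rightarrow> 'x \<Rightarrow> 'x \<Rightarrow> real" where
  "margin f x xp xn = f x \<bullet> (f xp - f xn)"

lemma abs_margin_le:
  assumes "norm (f x) = 1" "norm (f xp) = 1" "norm (f xn) = 1"
  shows "\<bar>margin f x xp xn\<bar> \<le> 2"
proof -
  have "\<bar>f x \<bullet> f xp\<bar> \<le> 1" "\<bar>f x \<bullet> f xn\<bar> \<le> 1"
    using Cauchy_Schwarz_ineq2 assms by (metis mult_1)+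
  then show ?thesis unfolding margin_def by (simp add: inner_diff_right)
qed

lemma softmax_sum_eq:
  "exp (f x \<bullet> f xp) + exp (f x \<bullet> f xn) = exp (f x \<bullet> f xp) * (1 + exp (- margin f x xp xn))"
  unfolding margin_def by (simp add: distrib_left inner_diff_right exp_add[symmetric])

lemma p2_eq_sigmoid:
  "p2 f x xp xn = exp (- margin f x xp xn) / (1 + exp (- margin f x xp xn))"
proof -
  have "exp (f x \<bullet> f xn) = exp (f x \<bullet> f xp) * exp (- margin f x xp xn)"
    unfolding margin_def by (simp add: inner_diff_right exp_add[symmetric])
  then show ?thesis unfolding p2_def softmax_sum_eq by simp
qed

lemma p1_eq_one_minus_p2: "p1 f x xp xn = 1 - p2 f x xp xn"
proof -
  have "0 < exp (f x \<bullet> f xp) + exp (f x \<bullet> f xn)" by (intro add_pos_pos exp_gt_zero)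
  then show ?thesis unfolding p1_def p2_def by (simp add: field_simps)
qed

lemma ln_p1: "ln (p1 f x xp xn) = - ell (margin f x xp xn)"
  unfolding p1_def softmax_sum_eq ell_def by (simp add: add_pos_pos ln_div ln_mult)

lemma ln_p2: "ln (p2 f x xp xn) = - margin f x xp xn - ell (margin f x xp xn)"
proof -
  have "0 < 1 + exp (- margin f x xp xn)" by (intro add_pos_pos) simp_all
  then show ?thesis unfolding p2_eq_sigmoid ell_def by (simp add: ln_div)
qed

lemma cross_entropy_eq:
  "- (p1 h x xp xn * ln (p1 g x xp xn) + p2 h x xp xn * ln (p2 g x xp xn))
     = ell (margin g x xp xn) + p2 h x xp xn * margin g x xp xn"
  unfolding ln_p1 ln_p2 p1_eq_one_minus_p2[of h] by (simp add: algebra_simps)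

abbreviation dis_integrand :: "('x \<Rightarrow> real ^ 'd) \<Rightarrow> ('x \<Rightarrow> real ^ 'd) \<Rightarrow> 'x \<Rightarrow> 'x \<Rightarrow> 'x \<Rightarrow> real" where
  "dis_integrand g h x xp xn \<equiv> - (p1 h x xp xn * ln (p1 g x xp xn) + p2 h x xp xn * ln (p2 g x xp xn))"

lemma ell_margin_le_dis_integrand:
  assumes "\<bar>margin g x xp xn\<bar> \<le> 2" "0 < \<alpha>"
  shows "ell (margin g x xp xn)
    \<le> \<alpha> * ell (margin h x xp xn) + dis_integrand g h x xp xn + (2 - \<alpha> + \<alpha> * ln (\<alpha> / 2))"
  using sigmoid_weighted_margin_upper[OF assms, of "margin h x xp xn"]
  unfolding cross_entropy_eq unfolding p2_eq_sigmoid[of h] by simp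

lemma ell_margin_ge_dis_integrand:
  assumes "\<bar>margin g x xp xn\<bar> \<le> 2" "- 2 \<le> margin h x xp xn"
    and "2 * exp 2 / (1 + exp 2) \<le> \<alpha>"
  shows "\<alpha> * ell (margin h x xp xn) + dis_integrand g h x xp xn - \<alpha> * ln (1 + exp 2) - \<alpha>
    \<le> ell (margin g x xp xn)"
  using sigmoid_weighted_margin_lower[OF assms]
  unfolding cross_entropy_eq unfolding p2_eq_sigmoid[of h] by simp

definition bounded_integrand :: "'x measure \<Rightarrow> ('x \<Rightarrow> 'x \<Rightarrow> 'x \<Rightarrow> real) \<Rightarrow> bool" where
  "bounded_integrand Mx F \<longleftrightarrow>
     (\<lambda>(x, xp, xn). F x xp xn) \<in> borel_measurable (Mx \<Otimes>\<^sub>M Mx \<Otimes>\<^sub>M Mx) \<and>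
     (\<exists>K. \<forall>x\<in>space Mx. \<forall>xp\<in>space Mx. \<forall>xn\<in>space Mx. \<bar>F x xp xn\<bar> \<le> K)"

lemma bounded_integrand_affine:
  assumes "bounded_integrand Mx F" "bounded_integrand Mx G"
  shows "bounded_integrand Mx (\<lambda>x xp xn. a * F x xp xn + G x xp xn + b)"
proof -
  obtain KF KG where
    "\<forall>x\<in>space Mx. \<forall>xp\<in>space Mx. \<forall>xn\<in>space Mx. \<bar>F x xp xn\<bar> \<le> KF"
    "\<forall>x\<in>space Mx. \<forall>xp\<in>space Mx. \<forall>xn\<in>space Mx. \<bar>G x xp xn\<bar> \<le> KG"
    using assms unfolding bounded_integrand_def by blast
  then have "\<forall>x\<in>space Mx. \<forall>xp\<in>space Mx. \<forall>xn\<in>space Mx.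
      \<bar>a * F x xp xn + G x xp xn + b\<bar> \<le> \<bar>a\<bar> * KF + KG + \<bar>b\<bar>"
    by (auto simp: abs_mult intro!: abs_triangle_ineq[THEN order_trans] add_mono mult_left_mono)
  moreover have "(\<lambda>(x, xp, xn). a * F x xp xn + G x xp xn + b) \<in> borel_measurable (Mx \<Otimes>\<^sub>M Mx \<Otimes>\<^sub>M Mx)"
    using assms unfolding bounded_integrand_def case_prod_beta'
    by (intro borel_measurable_add borel_measurable_times) auto
  ultimately show ?thesis unfolding bounded_integrand_def by blast
qed

lemma task_dist_triple_prob_space:
  assumes "task_dist Mx mu D"
  shows "prob_space (D cp \<Otimes>\<^sub>M D cp \<Otimes>\<^sub>M D cn)"
    and "sets (D cp \<Otimes>\<^sub>M D cp \<Otimes>\<^sub>M D cn) = sets (Mx \<Otimes>\<^sub>M Mx \<Otimes>\<^sub>M Mx)"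
    and "space (D cp \<Otimes>\<^sub>M D cp \<Otimes>\<^sub>M D cn) = space Mx \<times> space Mx \<times> space Mx"
proof -
  have D: "prob_space (D c)" "sets (D c) = sets Mx" for c
    using assms unfolding task_dist_def space_prob_algebra by auto
  show "prob_space (D cp \<Otimes>\<^sub>M D cp \<Otimes>\<^sub>M D cn)"
    by (intro prob_space_pair D)
  show "sets (D cp \<Otimes>\<^sub>M D cp \<Otimes>\<^sub>M D cn) = sets (Mx \<Otimes>\<^sub>M Mx \<Otimes>\<^sub>M Mx)"
    by (intro sets_pair_measure_cong D)
  have "space (D c) = space Mx" for c using D(2) by (rule sets_eq_imp_space_eq)
  then show "space (D cp \<Otimes>\<^sub>M D cp \<Otimes>\<^sub>M D cn) = space Mx \<times> space Mx \<times> space Mx"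
    by (simp add: space_pair_measure)
qed

lemma bounded_integrand_integrable:
  assumes D: "task_dist Mx mu D" and F: "bounded_integrand Mx F"
  shows "integrable (D cp \<Otimes>\<^sub>M D cp \<Otimes>\<^sub>M D cn) (\<lambda>(x, xp, xn). F x xp xn)"
    and "integrable (pair_pmf mu mu)
           (\<lambda>(cp, cn). \<integral>y. (\<lambda>(x, xp, xn). F x xp xn) y \<partial>(D cp \<Otimes>\<^sub>M D cp \<Otimes>\<^sub>M D cn))"
proof -
  obtain K where K: "\<forall>x\<in>space Mx. \<forall>xp\<in>space Mx. \<forall>xn\<in>space Mx. \<bar>F x xp xn\<bar> \<le> K"
    using F unfolding bounded_integrand_def by blast
  have inner: "integrable (D cp \<Otimes>\<^sub>M D cp \<Otimes>\<^sub>M D cn) (\<lambda>(x, xp, xn). F x xp xn)"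
      and "\<bar>\<integral>y. (\<lambda>(x, xp, xn). F x xp xn) y \<partial>(D cp \<Otimes>\<^sub>M D cp \<Otimes>\<^sub>M D cn)\<bar> \<le> K" for cp cn
  proof -
    let ?P = "D cp \<Otimes>\<^sub>M D cp \<Otimes>\<^sub>M D cn"
    interpret prob_space ?P by (rule task_dist_triple_prob_space[OF D])
    have sets: "sets ?P = sets (Mx \<Otimes>\<^sub>M Mx \<Otimes>\<^sub>M Mx)" by (rule task_dist_triple_prob_space[OF D])
    have bound: "\<bar>(\<lambda>(x, xp, xn). F x xp xn) y\<bar> \<le> K" if "y \<in> space ?P" for y
      using that K sets_eq_imp_space_eq[OF sets] by (auto simp: space_pair_measure)
    have meas: "(\<lambda>(x, xp, xn). F x xp xn) \<in> borel_measurable ?P"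
      using F unfolding bounded_integrand_def measurable_cong_sets[OF sets refl] by blast
    show "integrable ?P (\<lambda>(x, xp, xn). F x xp xn)"
      using meas bound by (intro integrable_const_bound[where B = K]) auto
    then have abs_integrable: "integrable ?P (\<lambda>y. \<bar>(\<lambda>(x, xp, xn). F x xp xn) y\<bar>)" by simp
    have "\<bar>\<integral>y. (\<lambda>(x, xp, xn). F x xp xn) y \<partial>?P\<bar> \<le> \<integral>y. \<bar>(\<lambda>(x, xp, xn). F x xp xn) y\<bar> \<partial>?P"
      by (rule integral_abs_bound)
    also have "\<dots> \<le> K"
      using bound abs_integrable by (intro integral_le_const AE_I2) auto
    finally show "\<bar>\<integral>y. (\<lambda>(x, xp, xn). F x xp xn) y \<partial>?P\<bar> \<le> K" .
  qed
  then show "integrable (pair_pmf mu mu)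
      (\<lambda>(cp, cn). \<integral>y. (\<lambda>(x, xp, xn). F x xp xn) y \<partial>(D cp \<Otimes>\<^sub>M D cp \<Otimes>\<^sub>M D cn))"
    by (intro measure_pmf.integrable_const_bound[where B = K]) (auto split: prod.split)
  show "integrable (D cp \<Otimes>\<^sub>M D cp \<Otimes>\<^sub>M D cn) (\<lambda>(x, xp, xn). F x xp xn)" by (rule inner)
qed

lemma task_expect_mono:
  assumes D: "task_dist Mx mu D" and F: "bounded_integrand Mx F" and G: "bounded_integrand Mx G"
    and le: "\<And>x xp xn. x \<in> space Mx \<Longrightarrow> xp \<in> space Mx \<Longrightarrow> xn \<in> space Mx \<Longrightarrow> F x xp xn \<le> G x xp xn"
  shows "task_expect mu D F \<le> task_expect mu D G"
proof -
  have "(\<integral>y. (\<lambda>(x, xp, xn). F x xp xn) y \<partial>(D cp \<Otimes>\<^sub>M D cp \<Otimes>\<^sub>M D cn))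
      \<le> (\<integral>y. (\<lambda>(x, xp, xn). G x xp xn) y \<partial>(D cp \<Otimes>\<^sub>M D cp \<Otimes>\<^sub>M D cn))" for cp cn
    using le by (intro integral_mono bounded_integrand_integrable(1)[OF D F] bounded_integrand_integrable(1)[OF D G])
      (auto simp: task_dist_triple_prob_space(3)[OF D])
  then show ?thesis
    unfolding task_expect_def
    by (intro integral_mono bounded_integrand_integrable(2)[OF D F] bounded_integrand_integrable(2)[OF D G])
      (auto split: prod.split)
qed

lemma task_expect_affine:
  assumes D: "task_dist Mx mu D" and F: "bounded_integrand Mx F" and G: "bounded_integrand Mx G"
  shows "task_expect mu D (\<lambda>x xp xn. a * F x xp xn + G x xp xn + b)
    = a * task_expect mu D F + task_expect mu D G + b"
proof -
  have inner: "(\<integral>y. (\<lambda>(x, xp, xn). a * F x xp xn + G x xp xn + b) y \<partial>(D cp \<Otimes>\<^sub>M D cp \<Otimes>\<^sub>M D cn))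
    = a * (\<integral>y. (\<lambda>(x, xp, xn). F x xp xn) y \<partial>(D cp \<Otimes>\<^sub>M D cp \<Otimes>\<^sub>M D cn))
      + (\<integral>y. (\<lambda>(x, xp, xn). G x xp xn) y \<partial>(D cp \<Otimes>\<^sub>M D cp \<Otimes>\<^sub>M D cn)) + b" for cp cn
  proof -
    interpret prob_space "D cp \<Otimes>\<^sub>M D cp \<Otimes>\<^sub>M D cn" by (rule task_dist_triple_prob_space[OF D])
    show ?thesis
      using bounded_integrand_integrable(1)[OF D F, of cp cn] bounded_integrand_integrable(1)[OF D G, of cp cn]
      by (simp add: case_prod_beta' prob_space)
  qed
  show ?thesis
    unfolding task_expect_def inner
    using bounded_integrand_integrable(2)[OF D F] bounded_integrand_integrable(2)[OF D G]
    by (simp add: case_prod_beta' measure_pmf.prob_space)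
qed

lemma encoder_abs_margin_le:
  assumes "encoder Mx f" "x \<in> space Mx" "xp \<in> space Mx" "xn \<in> space Mx"
  shows "\<bar>margin f x xp xn\<bar> \<le> 2"
  using assms by (intro abs_margin_le) (auto simp: encoder_def)

lemma bounded_integrand_ell_margin:
  assumes f: "encoder Mx f"
  shows "bounded_integrand Mx (\<lambda>x xp xn. ell (margin f x xp xn))"
proof -
  have [measurable]: "f \<in> borel_measurable Mx" using f by (simp add: encoder_def)
  have "(\<lambda>(x, xp, xn). ell (margin f x xp xn)) \<in> borel_measurable (Mx \<Otimes>\<^sub>M Mx \<Otimes>\<^sub>M Mx)"
    unfolding margin_def ell_def by measurable
  moreover have "\<bar>ell (margin f x xp xn)\<bar> \<le> exp 2"
    if "x \<in> space Mx" "xp \<in> space Mx" "xn \<in> space Mx" for x xp xn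
    using encoder_abs_margin_le[OF f that] by (intro abs_ell_le_exp2) (simp add: abs_le_iff)
  ultimately show ?thesis unfolding bounded_integrand_def by blast
qed

lemma bounded_integrand_dis_integrand:
  assumes g: "encoder Mx g" and h: "encoder Mx h"
  shows "bounded_integrand Mx (dis_integrand g h)"
proof -
  have [measurable]: "g \<in> borel_measurable Mx" "h \<in> borel_measurable Mx"
    using g h by (simp_all add: encoder_def)
  have "(\<lambda>(x, xp, xn). dis_integrand g h x xp xn) \<in> borel_measurable (Mx \<Otimes>\<^sub>M Mx \<Otimes>\<^sub>M Mx)"
    unfolding p1_def p2_def by measurable
  moreover have "\<bar>dis_integrand g h x xp xn\<bar> \<le> exp 2 + 2"
    if "x \<in> space Mx" "xp \<in> space Mx" "xn \<in> space Mx" for x xp xn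
  proof -
    have m: "\<bar>margin g x xp xn\<bar> \<le> 2" using encoder_abs_margin_le[OF g that] .
    have "0 \<le> p2 h x xp xn" "p2 h x xp xn \<le> 1"
      unfolding p2_eq_sigmoid by (simp_all add: add_pos_pos)
    then have "\<bar>p2 h x xp xn * margin g x xp xn\<bar> \<le> 1 * 2"
      unfolding abs_mult using m by (intro mult_mono) auto
    moreover have "\<bar>ell (margin g x xp xn)\<bar> \<le> exp 2" using m by (intro abs_ell_le_exp2) simp
    ultimately show ?thesis unfolding cross_entropy_eq by simp
  qed
  ultimately show ?thesis unfolding bounded_integrand_def by blast
qed

theorem lemma1:
  fixes Mx :: "'x measure" and mu :: "'c pmf" and D :: "'c \<Rightarrow> 'x measure"
    and g h :: "'x \<Rightarrow> real ^ 'd"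
    and \<alpha> \<beta> \<beta>' :: real
  assumes "task_dist Mx mu D"
    and "encoder Mx g" and "encoder Mx h"
    and "\<alpha> = 2 * exp 1 ^ 2 / (1 + exp 1 ^ 2)"
    and "\<beta> = 2 - \<alpha> + \<alpha> * ln (\<alpha> / 2)"
    and "\<beta>' = - \<alpha> * ln (1 + exp 1 ^ 2) - \<alpha>"
  shows "L_con g mu D \<le> \<alpha> * L_con h mu D + L_dis g h mu D + \<beta> \<and>
         L_con g mu D \<ge> \<alpha> * L_con h mu D + L_dis g h mu D + \<beta>'"
proof -
  note D = assms(1) and g = assms(2) and h = assms(3)
  have exp_sq: "exp 1 ^ 2 = exp (2 :: real)" by (simp add: exp_of_nat_mult[symmetric])
  have \<alpha>: "\<alpha> = 2 * exp 2 / (1 + exp 2)" "0 < \<alpha>" using assms(4) by (simp_all add: exp_sq add_pos_pos)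
  note Bg = bounded_integrand_ell_margin[OF g] and Bh = bounded_integrand_ell_margin[OF h]
    and Bdis = bounded_integrand_dis_integrand[OF g h]
  have L_con_eq: "L_con f mu D = task_expect mu D (\<lambda>x xp xn. ell (margin f x xp xn))" for f :: "'x \<Rightarrow> real ^ 'd"
    unfolding L_con_def margin_def ..
  have "L_con g mu D \<le> \<alpha> * L_con h mu D + L_dis g h mu D + \<beta>"
    unfolding L_con_eq L_dis_def task_expect_affine[OF D Bh Bdis, symmetric]
  proof (rule task_expect_mono[OF D Bg bounded_integrand_affine[OF Bh Bdis]])
    fix x xp xn assume "x \<in> space Mx" "xp \<in> space Mx" "xn \<in> space Mx"
    from encoder_abs_margin_le[OF g this] show "ell (margin g x xp xn)
      \<le> \<alpha> * ell (margin h x xp xn) + dis_integrand g h x xp xn + \<beta>"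
      unfolding assms(5) by (rule ell_margin_le_dis_integrand[OF _ \<alpha>(2)])
  qed
  moreover have "\<alpha> * L_con h mu D + L_dis g h mu D + \<beta>' \<le> L_con g mu D"
    unfolding L_con_eq L_dis_def task_expect_affine[OF D Bh Bdis, symmetric]
  proof (rule task_expect_mono[OF D bounded_integrand_affine[OF Bh Bdis] Bg])
    fix x xp xn assume x: "x \<in> space Mx" "xp \<in> space Mx" "xn \<in> space Mx"
    have "- 2 \<le> margin h x xp xn" using encoder_abs_margin_le[OF h x] by simp
    from ell_margin_ge_dis_integrand[OF encoder_abs_margin_le[OF g x] this \<alpha>(1)[symmetric, THEN eq_refl]]
    show "\<alpha> * ell (margin h x xp xn) + dis_integrand g h x xp xn + \<beta>' \<le> ell (margin g x xp xn)"
      unfolding assms(6) exp_sq by simp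
  qed
  ultimately show ?thesis by simp
qed

end
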